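(* Fix $a\in(0,1/2)$, $b\in(0,1)$ and a constant $c>0$, and consider the spread process with parameters $(G,r,T,a,b)$. Suppose that $$\max\Big\{\frac{V_G(r,s')-V_G(r,s)}{V_G(r,t)}:\ s<s'\le t,\ s'-s\le t^{0.5+c}\Big\}\longrightarrow0\quad\text{as }t\to\infty.$$ Then for every $\eta>0$ there is $t_0$ such that for all $t\ge t_0$, $\Pr\big[|\lambda_{G,r}(t)-\mathbb{E}[\lambda_{G,r}(t)]|>\eta\big]<\eta$.
   Context: Spread process. Fix $a,b\in[0,1]$. Let $G=(V,E)$ be a connected, locally finite, undirected graph, $r\in V$ a root, and $T$ a BFS spanning tree of $G$ rooted at $r$ ($d_T(r,v)=d_G(r,v)$), oriented away from $r$, with parent $p(v)$ for $v\ne r$. The spread process with parameters $(G,r,T,a,b)$ is the random sequence $f_t:V\to\{+1,-1,\bot\}$: $f_t(r)=+1$ for all $t$; $f_0(v)=\bot$ for $v\ne r$; for $t\ge1$ and each $v\ne r$ independently: if $f_{t-1}(v)=\bot\ne f_{t-1}(p(v))$ then $f_t(v)=f_{t-1}(p(v))$ w.p. $1-a$ and $-f_{t-1}(p(v))$ w.p. $a$; if $f_{t-1}(v)\ne\bot$ then $f_t(v)=f_{t-1}(p(v))$ w.p. $b$ and $f_{t-1}(v)$ w.p. $1-b$; if $f_{t-1}(v)=f_{t-1}(p(v))=\bot$ then $f_t(v)=\bot$. Volume: $V_G(r,\rho)=|\{u:d_G(r,u)\le\rho\}|$. Opinion bias: $\lambda_{G,r}(t)=\dfrac{|\{v:f_t(v)=+1\}|-|\{v:f_t(v)=-1\}|}{|\{v:f_t(v)\ne\bot\}|}$.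 *)

theory Defs
  imports "HOL-Probability.Probability"
begin

datatype opinion = Pos | Neg | Bot

fun opp :: "opinion \<Rightarrow> opinion" where
  "opp Pos = Neg" | "opp Neg = Pos" | "opp Bot = Bot"

text \<open>Graph given by an edge relation E on the vertex type 'v (V = UNIV).\<close>

definition edge_rel :: "('v \<Rightarrow> 'v \<Rightarrow> bool) \<Rightarrow> ('v \<times> 'v) set" where
  "edge_rel E = {(x, y). E x y}"

definition gdist :: "('v \<Rightarrow> 'v \<Rightarrow> bool) \<Rightarrow> 'v \<Rightarrow> 'v \<Rightarrow> nat" where
  "gdist E u v = (LEAST n. (u, v) \<in> edge_rel E ^^ n)"

definition connected_graph :: "('v \<Rightarrow> 'v \<Rightarrow> bool) \<Rightarrow> bool" where
  "connected_graph E \<longleftrightarrow> (\<forall>u v. \<exists>n. (u, v) \<in> edge_rel E ^^ n)"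

definition locally_finite :: "('v \<Rightarrow> 'v \<Rightarrow> bool) \<Rightarrow> bool" where
  "locally_finite E \<longleftrightarrow> (\<forall>v. finite {u. E v u})"

definition undirected :: "('v \<Rightarrow> 'v \<Rightarrow> bool) \<Rightarrow> bool" where
  "undirected E \<longleftrightarrow> (\<forall>u v. E u v \<longrightarrow> E v u)"

text \<open>BFS spanning tree rooted at r, given by its parent map p.\<close>
definition bfs_parent :: "('v \<Rightarrow> 'v \<Rightarrow> bool) \<Rightarrow> 'v \<Rightarrow> ('v \<Rightarrow> 'v) \<Rightarrow> bool" where
  "bfs_parent E r p \<longleftrightarrow>
     (\<forall>v. v \<noteq> r \<longrightarrow> E (p v) v \<and> gdist E r v = gdist E r (p v) + 1)"

definition volume :: "('v \<Rightarrow> 'v \<Rightarrow> bool) \<Rightarrow> 'v \<Rightarrow> nat \<Rightarrow> nat" where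
  "volume E r \<rho> = card {u. gdist E r u \<le> \<rho>}"

definition local_step :: "real \<Rightarrow> real \<Rightarrow> ('v \<Rightarrow> 'v) \<Rightarrow> ('v \<Rightarrow> opinion) \<Rightarrow> 'v \<Rightarrow> opinion pmf" where
  "local_step a b p f v =
     (if f v = Bot then
        (if f (p v) = Bot then return_pmf Bot
         else map_pmf (\<lambda>x. if x then opp (f (p v)) else f (p v)) (bernoulli_pmf a))
      else map_pmf (\<lambda>x. if x then f (p v) else f v) (bernoulli_pmf b))"

definition spread_step :: "real \<Rightarrow> real \<Rightarrow> 'v \<Rightarrow> ('v \<Rightarrow> 'v) \<Rightarrow> ('v \<Rightarrow> opinion) \<Rightarrow> ('v \<Rightarrow> opinion) pmf" where
  "spread_step a b r p f =
     map_pmf (\<lambda>g. g(r := Pos))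
       (Pi_pmf {v. v \<noteq> r \<and> (f v \<noteq> Bot \<or> f (p v) \<noteq> Bot)} Bot (local_step a b p f))"

fun spread_dist :: "real \<Rightarrow> real \<Rightarrow> 'v \<Rightarrow> ('v \<Rightarrow> 'v) \<Rightarrow> nat \<Rightarrow> ('v \<Rightarrow> opinion) pmf" where
  "spread_dist a b r p 0 = return_pmf (\<lambda>v. if v = r then Pos else Bot)"
| "spread_dist a b r p (Suc t) = bind_pmf (spread_dist a b r p t) (spread_step a b r p)"

definition opinion_bias :: "('v \<Rightarrow> opinion) \<Rightarrow> real" where
  "opinion_bias f =
     (real (card {v. f v = Pos}) - real (card {v. f v = Neg})) / real (card {v. f v \<noteq> Bot})"

end

theory Submission
  imports Defs "HOL-Real_Asymp.Real_Asymp"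
begin

(* Encode Pos, Neg, Bot as +1, -1, 0. At time t exactly the vertices at level at most t hold an
   opinion, so the bias is the average of the encoded opinions over that ball and its variance is
   the average of the pairwise covariances. Given the previous configuration, distinct vertices
   update independently, which turns the covariances into a linear recursion along the tree; with
   q = 1 - t^(c-1/2) and rho = 1 + t^(2c-1)/2 (for c <= 1/4) it propagates the bound
   |cov_s(x,y)| <= 4 q^(level gap) rho^s. Pairs whose levels differ by at least t^(1/2+c) therefore
   contribute exp(-Omega(t^(2c))), while by the volume hypothesis only a vanishing fraction of the
   ball lies within t^(1/2+c) levels of any vertex. So the variance tends to 0 and Chebyshev's
   inequality concludes. *)

fun opinion_val :: "opinion \<Rightarrow> real" where
  "opinion_val Pos = 1" | "opinion_val Neg = -1" | "opinion_val Bot = 0"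

lemma opinion_val_opp [simp]: "opinion_val (opp x) = - opinion_val x"
  by (cases x) auto

lemma opp_eq_Bot_iff [simp]: "opp x = Bot \<longleftrightarrow> x = Bot"
  by (cases x) auto

lemma abs_opinion_val_le: "\<bar>opinion_val x\<bar> \<le> 1"
  by (cases x) auto

lemma opinion_val_eq_of_bool: "opinion_val x = of_bool (x = Pos) - of_bool (x = Neg)"
  by (cases x) auto

lemma expectation_finite_pmf:
  assumes "finite (set_pmf M)"
  shows "measure_pmf.expectation M (h :: _ \<Rightarrow> real) = (\<Sum>x\<in>set_pmf M. pmf M x * h x)"
  using assms by (subst integral_measure_pmf[of "set_pmf M"]) auto

lemma expectation_cong_finite_pmf:
  assumes "finite (set_pmf M)" "\<And>x. x \<in> set_pmf M \<Longrightarrow> f x = g x"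
  shows "measure_pmf.expectation M (f :: _ \<Rightarrow> real) = measure_pmf.expectation M g"
  using assms by (simp add: expectation_finite_pmf)

lemma expectation_bind_finite_pmf:
  assumes "finite (set_pmf M)" "\<And>x. x \<in> set_pmf M \<Longrightarrow> finite (set_pmf (N x))"
  shows "measure_pmf.expectation (bind_pmf M N) (h :: _ \<Rightarrow> real) =
         measure_pmf.expectation M (\<lambda>x. measure_pmf.expectation (N x) h)"
  using assms by (subst pmf_expectation_bind[of "set_pmf M"]) (auto simp: expectation_finite_pmf)

lemma expectation_pair_pmf_mult:
  assumes "finite (set_pmf A)" "finite (set_pmf B)"
  shows "measure_pmf.expectation (pair_pmf A B) (\<lambda>(x, y). (\<phi> x :: real) * \<psi> y) =
         measure_pmf.expectation A \<phi> * measure_pmf.expectation B \<psi>"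
proof -
  have "measure_pmf.expectation (pair_pmf A B) (\<lambda>(x, y). \<phi> x * \<psi> y) =
     measure_pmf.expectation A (\<lambda>x. measure_pmf.expectation (map_pmf (Pair x) B) (\<lambda>(x, y). \<phi> x * \<psi> y))"
    unfolding pair_pmf_def map_pmf_def[symmetric] using assms by (subst expectation_bind_finite_pmf) auto
  then show ?thesis by simp
qed

lemma Pi_pmf_pair_components:
  assumes "finite A" "x \<noteq> y"
  shows "map_pmf (\<lambda>g. (g x, g y)) (Pi_pmf A dflt q) =
         pair_pmf (map_pmf (\<lambda>g. g x) (Pi_pmf A dflt q)) (map_pmf (\<lambda>g. g y) (Pi_pmf A dflt q))"
proof (cases "x \<in> A")
  case True
  define A' where "A' = A - {x}"
  have A: "A = insert x A'" "x \<notin> A'" "finite A'" using True assms by (auto simp: A'_def)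
  have "map_pmf (\<lambda>g. (g x, g y)) (Pi_pmf A dflt q) =
        map_pmf (\<lambda>(z, f). (z, f y)) (pair_pmf (q x) (Pi_pmf A' dflt q))"
    unfolding A(1) using A assms by (subst Pi_pmf_insert) (auto simp: pmf.map_comp o_def case_prod_unfold)
  also have "\<dots> = pair_pmf (q x) (map_pmf (\<lambda>f. f y) (Pi_pmf A' dflt q))"
    using map_pair[of id "\<lambda>f. f y" "q x" "Pi_pmf A' dflt q"] by (simp add: case_prod_unfold)
  finally show ?thesis
    using A assms True by (simp add: Pi_pmf_component)
next
  case False
  have "map_pmf (\<lambda>g. (g x, g y)) (Pi_pmf A dflt q) = map_pmf (\<lambda>g. (dflt, g y)) (Pi_pmf A dflt q)"
    using False set_Pi_pmf_subset[OF assms(1), of dflt q] by (intro pmf.map_cong refl) auto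
  also have "\<dots> = pair_pmf (return_pmf dflt) (map_pmf (\<lambda>g. g y) (Pi_pmf A dflt q))"
    by (simp add: pair_return_pmf1 pmf.map_comp o_def)
  finally show ?thesis
    using False assms by (simp add: Pi_pmf_component)
qed

lemma abs_expectation_le_finite_pmf:
  assumes "finite (set_pmf M)" "\<And>x. x \<in> set_pmf M \<Longrightarrow> \<bar>h x\<bar> \<le> (B :: real)"
  shows "\<bar>measure_pmf.expectation M h\<bar> \<le> B"
proof -
  have "\<bar>measure_pmf.expectation M h\<bar> \<le> (\<Sum>x\<in>set_pmf M. \<bar>pmf M x * h x\<bar>)"
    using assms(1) by (simp add: expectation_finite_pmf sum_abs)
  also have "\<dots> \<le> (\<Sum>x\<in>set_pmf M. pmf M x * B)"
    using assms(2) by (intro sum_mono) (simp add: abs_mult mult_left_mono)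
  also have "\<dots> = B"
    using sum_pmf_eq_1[OF assms(1), of M] by (simp add: sum_distrib_right[symmetric])
  finally show ?thesis .
qed

lemma prob_abs_deviation_gt_lt:
  fixes h :: "'a \<Rightarrow> real"
  assumes "finite (set_pmf M)" "0 < \<eta>" "measure_pmf.variance M h < \<eta>^3"
  shows "measure_pmf.prob M {x. \<bar>h x - measure_pmf.expectation M h\<bar> > \<eta>} < \<eta>"
proof -
  have "measure_pmf.prob M {x. \<bar>h x - measure_pmf.expectation M h\<bar> > \<eta>}
     \<le> measure_pmf.prob M {x \<in> space (measure_pmf M). \<eta> \<le> \<bar>h x - measure_pmf.expectation M h\<bar>}"
    by (intro measure_pmf.finite_measure_mono) auto
  also have "\<dots> \<le> measure_pmf.variance M h / \<eta>\<^sup>2"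
    using assms by (intro measure_pmf.Chebyshev_inequality) (auto simp: integrable_measure_pmf_finite)
  also have "\<dots> < \<eta>^3 / \<eta>\<^sup>2"
    using assms(2,3) by (simp add: divide_strict_right_mono)
  also have "\<dots> = \<eta>"
    using assms(2) by (simp add: power2_eq_square power3_eq_cube)
  finally show ?thesis .
qed

lemma contraction_growth_le_exp:
  fixes t :: nat and c :: real
  assumes t: "1 \<le> t" and \<delta>_le: "real t powr (c - 1/2) \<le> 1/2"
  defines "\<delta> \<equiv> real t powr (c - 1/2)" and "W \<equiv> nat \<lfloor>real t powr (1/2 + c)\<rfloor>"
  shows "(1 - \<delta>)^W * (1 + \<delta>\<^sup>2/2)^t \<le> exp (1 - real t powr (2*c) / 2)"
proof -
  have \<delta>: "0 \<le> \<delta>" "\<delta> \<le> 1/2" using \<delta>_le by (simp_all add: \<delta>_def)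
  have t_pos: "0 < real t" using t by simp
  have "(1 - \<delta>)^W \<le> exp (-\<delta>)^W"
    using exp_ge_add_one_self[of "-\<delta>"] \<delta> by (intro power_mono) auto
  also have "\<dots> = exp (- (\<delta> * real W))"
    by (simp add: exp_of_nat_mult[symmetric] mult.commute)
  finally have contraction: "(1 - \<delta>)^W \<le> exp (- (\<delta> * real W))" .
  have "(1 + \<delta>\<^sup>2/2)^t \<le> exp (\<delta>\<^sup>2/2)^t"
    using exp_ge_add_one_self[of "\<delta>\<^sup>2/2"] by (intro power_mono) auto
  also have "\<dots> = exp (real t * \<delta>\<^sup>2 / 2)"
    by (simp add: exp_of_nat_mult[symmetric])
  finally have growth: "(1 + \<delta>\<^sup>2/2)^t \<le> exp (real t * \<delta>\<^sup>2 / 2)" .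
  have "\<delta>\<^sup>2 = real t powr (2*c - 1)"
    using t_pos by (simp add: \<delta>_def power2_eq_square powr_add[symmetric])
  then have t_\<delta>: "real t * \<delta>\<^sup>2 = real t powr (2*c)"
    using powr_mult_base[of "real t" "2*c - 1"] by simp
  have "real t powr (1/2 + c) - 1 \<le> real W"
    unfolding W_def using real_of_int_floor_gt_diff_one[of "real t powr (1/2 + c)"] by simp
  then have "\<delta> * (real t powr (1/2 + c) - 1) \<le> \<delta> * real W"
    using \<delta> by (intro mult_left_mono)
  moreover have "\<delta> * real t powr (1/2 + c) = real t powr (2*c)"
    by (simp add: \<delta>_def powr_add[symmetric])
  ultimately have "real t powr (2*c) - 1 \<le> \<delta> * real W"
    using \<delta> by (simp add: right_diff_distrib)
  then have "exp (- (\<delta> * real W)) * exp (real t * \<delta>\<^sup>2 / 2) \<le> exp (1 - real t powr (2*c) / 2)"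
    by (simp add: exp_add[symmetric] t_\<delta>)
  moreover have "(1 - \<delta>)^W * (1 + \<delta>\<^sup>2/2)^t \<le> exp (- (\<delta> * real W)) * exp (real t * \<delta>\<^sup>2 / 2)"
    using contraction growth \<delta> by (intro mult_mono) auto
  ultimately show ?thesis by linarith
qed

locale bfs_tree =
  fixes E :: "'v \<Rightarrow> 'v \<Rightarrow> bool" and r :: 'v and p :: "'v \<Rightarrow> 'v"
  assumes locally_finite: "locally_finite E" and bfs: "bfs_parent E r p"
begin

abbreviation level :: "'v \<Rightarrow> nat" where
  "level \<equiv> gdist E r"

abbreviation tree_ball :: "nat \<Rightarrow> 'v set" where
  "tree_ball t \<equiv> {v. level v \<le> t}"

lemma level_root [simp]: "level r = 0"
  unfolding gdist_def by (rule Least_eq_0) (simp add: edge_rel_def)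

lemma level_parent: "v \<noteq> r \<Longrightarrow> level v = level (p v) + 1"
  using bfs unfolding bfs_parent_def by blast

lemma edge_parent: "v \<noteq> r \<Longrightarrow> E (p v) v"
  using bfs unfolding bfs_parent_def by blast

lemma level_eq_0_iff: "level v = 0 \<longleftrightarrow> v = r"
  using level_parent by fastforce

lemma finite_tree_ball: "finite (tree_ball n)"
proof (induction n)
  case 0
  have "tree_ball 0 = {r}" using level_eq_0_iff by auto
  then show ?case by simp
next
  case (Suc n)
  have "tree_ball (Suc n) \<subseteq> tree_ball n \<union> (\<Union>w\<in>tree_ball n. {u. E w u})"
  proof
    fix v assume v: "v \<in> tree_ball (Suc n)"
    show "v \<in> tree_ball n \<union> (\<Union>w\<in>tree_ball n. {u. E w u})"
    proof (cases "level v \<le> n")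
      case False
      then have "v \<noteq> r" by auto
      then show ?thesis using level_parent[of v] edge_parent[of v] v False by auto
    qed simp
  qed
  moreover have "finite (tree_ball n \<union> (\<Union>w\<in>tree_ball n. {u. E w u}))"
    using Suc locally_finite unfolding locally_finite_def by auto
  ultimately show ?case by (rule finite_subset)
qed

lemma card_tree_ball_pos: "0 < card (tree_ball t)"
proof -
  have "r \<in> tree_ball t" by simp
  then show ?thesis using finite_tree_ball[of t] card_gt_0_iff by blast
qed

lemma card_levels_between:
  assumes "s \<le> s'"
  shows "real (card {v. s < level v \<and> level v \<le> s'}) = real (volume E r s') - real (volume E r s)"
proof -
  have "{v. s < level v \<and> level v \<le> s'} = tree_ball s' - tree_ball s" by auto
  moreover have "tree_ball s \<subseteq> tree_ball s'" using assms by auto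
  ultimately show ?thesis
    using finite_tree_ball[of s] card_mono[OF finite_tree_ball]
    by (simp add: card_Diff_subset volume_def of_nat_diff)
qed

definition window_growth :: "real \<Rightarrow> nat \<Rightarrow> real" where
  "window_growth c = (\<lambda>t. Max {(real (volume E r s') - real (volume E r s)) / real (volume E r t) | s s'.
      s < s' \<and> s' \<le> t \<and> real (s' - s) \<le> real t powr (0.5 + c)})"

lemma card_levels_between_le_window_growth:
  assumes "0 < c" "1 \<le> t" "s \<le> s'" "s' \<le> t" "real (s' - s) \<le> real t powr (0.5 + c)"
  shows "real (card {v. s < level v \<and> level v \<le> s'}) \<le> window_growth c t * real (card (tree_ball t))"
proof -
  let ?ratio = "\<lambda>s s'. (real (volume E r s') - real (volume E r s)) / real (volume E r t)"
  let ?F = "{?ratio s s' | s s'. s < s' \<and> s' \<le> t \<and> real (s' - s) \<le> real t powr (0.5 + c)}"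
  have "?F \<subseteq> (\<lambda>(s, s'). ?ratio s s') ` ({..t} \<times> {..t})" by auto
  then have finite_F: "finite ?F" by (rule finite_subset) auto
  have V_pos: "0 < real (volume E r t)" using card_tree_ball_pos by (simp add: volume_def)
  show ?thesis
  proof (cases "s < s'")
    case True
    then have "?ratio s s' \<in> ?F" using assms by blast
    then have "?ratio s s' \<le> window_growth c t"
      unfolding window_growth_def using finite_F by (rule Max_ge[rotated])
    then show ?thesis
      using V_pos card_levels_between[OF assms(3)] by (simp add: volume_def divide_le_eq)
  next
    case False
    have "?ratio 0 1 \<in> ?F"
      using assms(1,2) ge_one_powr_ge_zero[of "real t" "0.5 + c"] by force
    then have "?ratio 0 1 \<le> window_growth c t"
      unfolding window_growth_def using finite_F by (rule Max_ge[rotated])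
    moreover have "0 \<le> ?ratio 0 1"
      using card_levels_between[of 0 1] V_pos by simp
    moreover have "{v. s < level v \<and> level v \<le> s'} = {}" using False assms(3) by auto
    ultimately show ?thesis by (simp only: card.empty of_nat_0) simp
  qed
qed

end

locale spread_process = bfs_tree E r p
  for E :: "'v \<Rightarrow> 'v \<Rightarrow> bool" and r :: 'v and p :: "'v \<Rightarrow> 'v" +
  fixes a b :: real
  assumes a_nonneg: "0 \<le> a" and a_le_half: "a \<le> 1/2" and b_nonneg: "0 \<le> b" and b_le_1: "b \<le> 1"
begin

abbreviation spread :: "nat \<Rightarrow> ('v \<Rightarrow> opinion) pmf" where
  "spread t \<equiv> spread_dist a b r p t"

definition reached_exactly :: "nat \<Rightarrow> ('v \<Rightarrow> opinion) \<Rightarrow> bool" where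
  "reached_exactly s f \<longleftrightarrow> f r = Pos \<and> (\<forall>v. f v = Bot \<longleftrightarrow> s < level v)"

abbreviation updating :: "('v \<Rightarrow> opinion) \<Rightarrow> 'v set" where
  "updating f \<equiv> {v. v \<noteq> r \<and> (f v \<noteq> Bot \<or> f (p v) \<noteq> Bot)}"

lemma updating_eq: "reached_exactly s f \<Longrightarrow> updating f = {v. v \<noteq> r \<and> level v \<le> Suc s}"
  unfolding reached_exactly_def using level_parent by fastforce

lemma finite_updating:
  assumes "reached_exactly s f" shows "finite (updating f)"
  using finite_tree_ball[of "Suc s"] unfolding updating_eq[OF assms] by (rule finite_subset[rotated]) auto

lemma finite_set_local_step: "finite (set_pmf (local_step a b p f v))"
  unfolding local_step_def by auto

lemma set_local_step_subset:
  assumes "f (p v) \<noteq> Bot" shows "set_pmf (local_step a b p f v) \<subseteq> {x. x \<noteq> Bot}"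
  unfolding local_step_def using assms by auto

lemma reached_exactly_spread_step:
  assumes f: "reached_exactly s f" and g: "g \<in> set_pmf (spread_step a b r p f)"
  shows "reached_exactly (Suc s) g"
proof -
  obtain h where h: "h \<in> set_pmf (Pi_pmf (updating f) Bot (local_step a b p f))" and g_eq: "g = h(r := Pos)"
    using g unfolding spread_step_def by auto
  have h': "h \<in> PiE_dflt (updating f) Bot (set_pmf \<circ> local_step a b p f)"
    using h unfolding set_Pi_pmf[OF finite_updating[OF f]] .
  have "g v = Bot \<longleftrightarrow> Suc s < level v" if "v \<noteq> r" for v
  proof (cases "level v \<le> Suc s")
    case True
    then have "v \<in> updating f" using updating_eq[OF f] that by auto
    then have "h v \<in> set_pmf (local_step a b p f v)" using h' unfolding PiE_dflt_def by auto
    moreover have "f (p v) \<noteq> Bot"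
      using f that True level_parent[of v] unfolding reached_exactly_def by auto
    ultimately have "h v \<noteq> Bot" using set_local_step_subset by blast
    then show ?thesis using g_eq that True by auto
  next
    case False
    then have "v \<notin> updating f" using updating_eq[OF f] by auto
    then have "h v = Bot" using h' unfolding PiE_dflt_def by auto
    then show ?thesis using g_eq that False by auto
  qed
  moreover have "g r = Pos" using g_eq by simp
  ultimately show ?thesis unfolding reached_exactly_def by (metis level_root not_less_zero opinion.distinct)
qed

lemma finite_set_spread_step: "reached_exactly s f \<Longrightarrow> finite (set_pmf (spread_step a b r p f))"
  unfolding spread_step_def using finite_updating finite_set_local_step
  by (auto simp: set_Pi_pmf intro!: finite_PiE_dflt)

lemma reached_exactly_spread: "f \<in> set_pmf (spread s) \<Longrightarrow> reached_exactly s f"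
proof (induction s arbitrary: f)
  case 0
  then show ?case unfolding reached_exactly_def using level_eq_0_iff by auto
next
  case (Suc s)
  then show ?case using reached_exactly_spread_step by auto
qed

lemma spread_Bot_iff: "f \<in> set_pmf (spread s) \<Longrightarrow> f v = Bot \<longleftrightarrow> s < level v"
  using reached_exactly_spread unfolding reached_exactly_def by blast

lemma finite_set_spread: "finite (set_pmf (spread s))"
  by (induction s) (use finite_set_spread_step reached_exactly_spread in auto)

lemma expectation_spread_Suc:
  "measure_pmf.expectation (spread (Suc s)) h =
   measure_pmf.expectation (spread s) (\<lambda>f. measure_pmf.expectation (spread_step a b r p f) (h :: _ \<Rightarrow> real))"
  by (simp only: spread_dist.simps)
     (rule expectation_bind_finite_pmf[OF finite_set_spread finite_set_spread_step[OF reached_exactly_spread]])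

lemma spread_step_component:
  assumes "reached_exactly s f" "x \<noteq> r"
  shows "map_pmf (\<lambda>g. g x) (spread_step a b r p f) =
     (if x \<in> updating f then local_step a b p f x else return_pmf Bot)"
proof -
  have "map_pmf (\<lambda>g. g x) (spread_step a b r p f) =
        map_pmf (\<lambda>g. g x) (Pi_pmf (updating f) Bot (local_step a b p f))"
    unfolding spread_step_def using assms by (simp add: pmf.map_comp o_def)
  then show ?thesis by (simp only: Pi_pmf_component[OF finite_updating[OF assms(1)]])
qed

lemma expectation_spread_step_mult:
  assumes f: "reached_exactly s f" and "x \<noteq> r" "y \<noteq> r" "x \<noteq> y"
  shows "measure_pmf.expectation (spread_step a b r p f) (\<lambda>g. \<phi> (g x) * (\<psi> (g y) :: real)) =
         measure_pmf.expectation (spread_step a b r p f) (\<lambda>g. \<phi> (g x)) *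
         measure_pmf.expectation (spread_step a b r p f) (\<lambda>g. \<psi> (g y))"
proof -
  let ?M = "spread_step a b r p f"
  let ?P = "Pi_pmf (updating f) Bot (local_step a b p f)"
  have "map_pmf (\<lambda>g. (g x, g y)) ?M = map_pmf (\<lambda>g. (g x, g y)) ?P"
    "map_pmf (\<lambda>g. g x) ?M = map_pmf (\<lambda>g. g x) ?P" "map_pmf (\<lambda>g. g y) ?M = map_pmf (\<lambda>g. g y) ?P"
    unfolding spread_step_def using assms by (simp_all add: pmf.map_comp o_def)
  then have "map_pmf (\<lambda>g. (g x, g y)) ?M = pair_pmf (map_pmf (\<lambda>g. g x) ?M) (map_pmf (\<lambda>g. g y) ?M)"
    using Pi_pmf_pair_components[OF finite_updating[OF f] assms(4)] by simp
  moreover have "measure_pmf.expectation ?M (\<lambda>g. \<phi> (g x) * \<psi> (g y)) =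
     measure_pmf.expectation (map_pmf (\<lambda>g. (g x, g y)) ?M) (\<lambda>(u, w). \<phi> u * \<psi> w)"
    by simp
  ultimately show ?thesis
    using finite_set_spread_step[OF f] by (simp add: expectation_pair_pmf_mult)
qed

lemma expectation_step_settled:
  assumes f: "reached_exactly s f" and "x \<noteq> r" "level x \<le> s"
  shows "measure_pmf.expectation (spread_step a b r p f) (\<lambda>g. opinion_val (g x)) =
         (1 - b) * opinion_val (f x) + b * opinion_val (f (p x))"
proof -
  have "x \<in> updating f" "f x \<noteq> Bot"
    using assms updating_eq[OF f] unfolding reached_exactly_def by auto
  moreover have "measure_pmf.expectation (spread_step a b r p f) (\<lambda>g. opinion_val (g x)) =
     measure_pmf.expectation (map_pmf (\<lambda>g. g x) (spread_step a b r p f)) opinion_val" by simp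
  ultimately show ?thesis
    using spread_step_component[OF assms(1,2)] b_nonneg b_le_1 by (simp add: local_step_def)
qed

lemma expectation_step_frontier:
  assumes f: "reached_exactly s f" and "x \<noteq> r" "level x = Suc s"
  shows "measure_pmf.expectation (spread_step a b r p f) (\<lambda>g. opinion_val (g x)) =
         (1 - 2*a) * opinion_val (f (p x))"
proof -
  have "x \<in> updating f" "f x = Bot" "f (p x) \<noteq> Bot"
    using assms updating_eq[OF f] level_parent[of x] unfolding reached_exactly_def by auto
  moreover have "measure_pmf.expectation (spread_step a b r p f) (\<lambda>g. opinion_val (g x)) =
     measure_pmf.expectation (map_pmf (\<lambda>g. g x) (spread_step a b r p f)) opinion_val" by simp
  ultimately show ?thesis
    using spread_step_component[OF assms(1,2)] a_nonneg a_le_half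
    by (simp add: local_step_def) (simp add: algebra_simps)
qed

definition mean :: "nat \<Rightarrow> 'v \<Rightarrow> real" where
  "mean s v = measure_pmf.expectation (spread s) (\<lambda>f. opinion_val (f v))"

definition cov :: "nat \<Rightarrow> 'v \<Rightarrow> 'v \<Rightarrow> real" where
  "cov s u v = measure_pmf.expectation (spread s)
     (\<lambda>f. (opinion_val (f u) - mean s u) * (opinion_val (f v) - mean s v))"

lemma abs_mean_le: "\<bar>mean s v\<bar> \<le> 1"
  unfolding mean_def by (rule abs_expectation_le_finite_pmf[OF finite_set_spread abs_opinion_val_le])

lemma abs_cov_le: "\<bar>cov s u v\<bar> \<le> 4"
  unfolding cov_def
proof (rule abs_expectation_le_finite_pmf[OF finite_set_spread])
  fix f
  have "\<bar>opinion_val (f u) - mean s u\<bar> \<le> 2" "\<bar>opinion_val (f v) - mean s v\<bar> \<le> 2"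
    using abs_opinion_val_le[of "f u"] abs_opinion_val_le[of "f v"] abs_mean_le[of s u] abs_mean_le[of s v]
    by linarith+
  then show "\<bar>(opinion_val (f u) - mean s u) * (opinion_val (f v) - mean s v)\<bar> \<le> 4"
    using mult_mono[of "\<bar>opinion_val (f u) - mean s u\<bar>" 2 "\<bar>opinion_val (f v) - mean s v\<bar>" 2]
    by (simp add: abs_mult)
qed

lemma cov_commute: "cov s u v = cov s v u"
  unfolding cov_def by (simp add: mult.commute)

lemma cov_0 [simp]: "cov 0 u v = 0"
  unfolding cov_def mean_def by simp

lemma mean_root [simp]: "mean s r = 1"
proof -
  have "mean s r = measure_pmf.expectation (spread s) (\<lambda>f. 1)"
    unfolding mean_def
    by (rule expectation_cong_finite_pmf[OF finite_set_spread])
       (auto dest!: reached_exactly_spread simp: reached_exactly_def)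
  then show ?thesis by simp
qed

lemma cov_root [simp]: "cov s r v = 0"
proof -
  have "cov s r v = measure_pmf.expectation (spread s) (\<lambda>f. 0)"
    unfolding cov_def
    by (rule expectation_cong_finite_pmf[OF finite_set_spread])
       (auto dest!: reached_exactly_spread simp: reached_exactly_def)
  then show ?thesis by simp
qed

lemma mean_unreached:
  assumes "s < level v" shows "mean s v = 0"
proof -
  have "mean s v = measure_pmf.expectation (spread s) (\<lambda>f. 0)"
    unfolding mean_def using assms
    by (intro expectation_cong_finite_pmf[OF finite_set_spread]) (simp add: spread_Bot_iff[THEN iffD2])
  then show ?thesis by simp
qed

lemma cov_unreached:
  assumes "s < level v" shows "cov s u v = 0"
proof -
  have "cov s u v = measure_pmf.expectation (spread s) (\<lambda>f. 0)"
    unfolding cov_def using assms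
    by (intro expectation_cong_finite_pmf[OF finite_set_spread]) (simp add: spread_Bot_iff[THEN iffD2] mean_unreached)
  then show ?thesis by simp
qed

lemma expectation_lincomb:
  "measure_pmf.expectation (spread s) (\<lambda>f. \<alpha> * opinion_val (f u) + \<beta> * opinion_val (f w)) =
   \<alpha> * mean s u + \<beta> * mean s w"
  unfolding mean_def using finite_set_spread[of s]
  by (simp add: expectation_finite_pmf sum.distrib sum_distrib_left algebra_simps)

lemma mean_Suc_settled:
  assumes "x \<noteq> r" "level x \<le> s"
  shows "mean (Suc s) x = (1 - b) * mean s x + b * mean s (p x)"
proof -
  have "mean (Suc s) x =
      measure_pmf.expectation (spread s) (\<lambda>f. (1 - b) * opinion_val (f x) + b * opinion_val (f (p x)))"
    unfolding mean_def expectation_spread_Suc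
    by (rule expectation_cong_finite_pmf[OF finite_set_spread])
       (rule expectation_step_settled[OF reached_exactly_spread assms])
  then show ?thesis by (simp add: expectation_lincomb)
qed

lemma mean_Suc_frontier:
  assumes "x \<noteq> r" "level x = Suc s"
  shows "mean (Suc s) x = (1 - 2*a) * mean s (p x)"
proof -
  have "mean (Suc s) x =
      measure_pmf.expectation (spread s) (\<lambda>f. 0 * opinion_val (f x) + (1 - 2*a) * opinion_val (f (p x)))"
    unfolding mean_def expectation_spread_Suc
    by (rule expectation_cong_finite_pmf[OF finite_set_spread])
       (simp add: expectation_step_frontier[OF reached_exactly_spread assms])
  then show ?thesis by (simp only: expectation_lincomb)
qed

abbreviation step_deviation :: "nat \<Rightarrow> ('v \<Rightarrow> opinion) \<Rightarrow> 'v \<Rightarrow> real" where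
  "step_deviation s f x \<equiv>
     measure_pmf.expectation (spread_step a b r p f) (\<lambda>g. opinion_val (g x)) - mean (Suc s) x"

lemma step_deviation_settled:
  assumes "f \<in> set_pmf (spread s)" "x \<noteq> r" "level x \<le> s"
  shows "step_deviation s f x =
     (1 - b) * (opinion_val (f x) - mean s x) + b * (opinion_val (f (p x)) - mean s (p x))"
  using expectation_step_settled[OF reached_exactly_spread[OF assms(1)] assms(2,3)]
    mean_Suc_settled[OF assms(2,3)]
  by (simp add: algebra_simps)

lemma step_deviation_frontier:
  assumes "f \<in> set_pmf (spread s)" "x \<noteq> r" "level x = Suc s"
  shows "step_deviation s f x =
     0 * (opinion_val (f x) - mean s x) + (1 - 2*a) * (opinion_val (f (p x)) - mean s (p x))"
  using expectation_step_frontier[OF reached_exactly_spread[OF assms(1)] assms(2,3)]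
    mean_Suc_frontier[OF assms(2,3)]
  by (simp add: algebra_simps)

text \<open>Given the previous configuration the two coordinates are independent, so the covariance at
  time \<open>s+1\<close> is the covariance of the conditional means.\<close>

lemma cov_Suc:
  assumes "x \<noteq> y" "x \<noteq> r" "y \<noteq> r"
  shows "cov (Suc s) x y =
    measure_pmf.expectation (spread s) (\<lambda>f. step_deviation s f x * step_deviation s f y)"
  unfolding cov_def expectation_spread_Suc
proof (rule expectation_cong_finite_pmf[OF finite_set_spread])
  fix f assume f: "f \<in> set_pmf (spread s)"
  let ?M = "spread_step a b r p f"
  have "measure_pmf.expectation ?M
      (\<lambda>g. (opinion_val (g x) - mean (Suc s) x) * (opinion_val (g y) - mean (Suc s) y)) =
    measure_pmf.expectation ?M (\<lambda>g. opinion_val (g x) - mean (Suc s) x) *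
    measure_pmf.expectation ?M (\<lambda>g. opinion_val (g y) - mean (Suc s) y)"
    by (rule expectation_spread_step_mult[OF reached_exactly_spread[OF f] assms(2,3,1)])
  then show "measure_pmf.expectation ?M
      (\<lambda>g. (opinion_val (g x) - mean (Suc s) x) * (opinion_val (g y) - mean (Suc s) y)) =
    step_deviation s f x * step_deviation s f y"
    using finite_set_spread_step[OF reached_exactly_spread[OF f]]
    by (simp add: integrable_measure_pmf_finite)
qed

lemma expectation_lincomb_deviations:
  "measure_pmf.expectation (spread s)
     (\<lambda>f. (\<alpha> * (opinion_val (f u) - mean s u) + \<beta> * (opinion_val (f u') - mean s u')) *
          (\<gamma> * (opinion_val (f v) - mean s v) + \<delta> * (opinion_val (f v') - mean s v'))) =
   \<alpha>*\<gamma> * cov s u v + \<alpha>*\<delta> * cov s u v' + \<beta>*\<gamma> * cov s u' v + \<beta>*\<delta> * cov s u' v'"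
proof -
  let ?Z = "\<lambda>f w. opinion_val (f w) - mean s w"
  have "(\<lambda>f. (\<alpha> * ?Z f u + \<beta> * ?Z f u') * (\<gamma> * ?Z f v + \<delta> * ?Z f v')) =
     (\<lambda>f. \<alpha>*\<gamma> * (?Z f u * ?Z f v) + \<alpha>*\<delta> * (?Z f u * ?Z f v') +
          \<beta>*\<gamma> * (?Z f u' * ?Z f v) + \<beta>*\<delta> * (?Z f u' * ?Z f v'))"
    by (rule ext) (simp only: distrib_left distrib_right mult_ac)
  then show ?thesis
    unfolding cov_def
    by (simp add: integrable_measure_pmf_finite[OF finite_set_spread] del: integral_mult_right_zero)
qed

lemma cov_Suc_settled:
  assumes "x \<noteq> y" "x \<noteq> r" "y \<noteq> r" "level x \<le> s" "level y \<le> s"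
  shows "cov (Suc s) x y = (1-b)*(1-b) * cov s x y + (1-b)*b * cov s x (p y) +
                           b*(1-b) * cov s (p x) y + b*b * cov s (p x) (p y)"
  unfolding cov_Suc[OF assms(1-3)]
  by (subst expectation_cong_finite_pmf[OF finite_set_spread])
     (auto simp: step_deviation_settled assms expectation_lincomb_deviations)

lemma cov_Suc_frontier:
  assumes "x \<noteq> y" "x \<noteq> r" "y \<noteq> r" "level x \<le> s" "level y = Suc s"
  shows "cov (Suc s) x y = (1-b)*(1-2*a) * cov s x (p y) + b*(1-2*a) * cov s (p x) (p y)"
proof -
  have "cov (Suc s) x y = measure_pmf.expectation (spread s)
     (\<lambda>f. ((1-b) * (opinion_val (f x) - mean s x) + b * (opinion_val (f (p x)) - mean s (p x))) *
          (0 * (opinion_val (f y) - mean s y) + (1-2*a) * (opinion_val (f (p y)) - mean s (p y))))"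
    unfolding cov_Suc[OF assms(1-3)]
    by (rule expectation_cong_finite_pmf[OF finite_set_spread])
       (simp add: step_deviation_settled step_deviation_frontier assms)
  then show ?thesis unfolding expectation_lincomb_deviations by simp
qed

text \<open>Rates for which the bound \<open>4 q^(level y - level x) \<rho>^s\<close> on \<open>cov s x y\<close> survives one step:
  the two inequalities are what the settled and the frontier recurrence require.\<close>

definition decay_rates :: "real \<Rightarrow> real \<Rightarrow> bool" where
  "decay_rates q \<rho> \<longleftrightarrow> 0 < q \<and> q \<le> 1 \<and> 1 \<le> \<rho> \<and>
     ((1-b)*(1-b) + b*b) * q + b*(1-b)*(q*q + 1) \<le> \<rho> * q \<and>
     (1-2*a) * ((1-b) + b*q) \<le> \<rho> * q"

lemma abs_cov_Suc_le_settled: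
  assumes "decay_rates q \<rho>" "0 \<le> A"
    and "x \<noteq> y" "x \<noteq> r" "y \<noteq> r" "level x \<le> s" "level y \<le> s"
    and "\<bar>cov s x y\<bar> \<le> A * q" "\<bar>cov s x (p y)\<bar> \<le> A"
    and "\<bar>cov s (p x) y\<bar> \<le> A * q * q" "\<bar>cov s (p x) (p y)\<bar> \<le> A * q"
  shows "\<bar>cov (Suc s) x y\<bar> \<le> A * (\<rho> * q)"
proof -
  have b: "0 \<le> b" "0 \<le> 1 - b" using b_nonneg b_le_1 by auto
  have "\<bar>cov (Suc s) x y\<bar> \<le> \<bar>(1-b)*(1-b) * cov s x y\<bar> + \<bar>(1-b)*b * cov s x (p y)\<bar> +
      \<bar>b*(1-b) * cov s (p x) y\<bar> + \<bar>b*b * cov s (p x) (p y)\<bar>"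
    unfolding cov_Suc_settled[OF assms(3-7)] by linarith
  also have "\<dots> = (1-b)*(1-b) * \<bar>cov s x y\<bar> + (1-b)*b * \<bar>cov s x (p y)\<bar> +
      b*(1-b) * \<bar>cov s (p x) y\<bar> + b*b * \<bar>cov s (p x) (p y)\<bar>"
    using b by (simp add: abs_mult)
  also have "\<dots> \<le> (1-b)*(1-b) * (A*q) + (1-b)*b * A + b*(1-b) * (A*q*q) + b*b * (A*q)"
    using assms(8-11) b by (intro add_mono mult_left_mono) auto
  also have "\<dots> = A * (((1-b)*(1-b) + b*b) * q + b*(1-b)*(q*q + 1))"
    by (simp add: algebra_simps)
  also have "\<dots> \<le> A * (\<rho> * q)"
    using assms(1,2) unfolding decay_rates_def by (intro mult_left_mono) auto
  finally show ?thesis .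
qed

lemma abs_cov_Suc_le_frontier:
  assumes "decay_rates q \<rho>" "0 \<le> A"
    and "x \<noteq> y" "x \<noteq> r" "y \<noteq> r" "level x \<le> s" "level y = Suc s"
    and "\<bar>cov s x (p y)\<bar> \<le> A" "\<bar>cov s (p x) (p y)\<bar> \<le> A * q"
  shows "\<bar>cov (Suc s) x y\<bar> \<le> A * (\<rho> * q)"
proof -
  have b: "0 \<le> b" "0 \<le> 1 - b" and a: "0 \<le> 1 - 2*a" using b_nonneg b_le_1 a_le_half by auto
  have "\<bar>cov (Suc s) x y\<bar> \<le> \<bar>(1-b)*(1-2*a) * cov s x (p y)\<bar> + \<bar>b*(1-2*a) * cov s (p x) (p y)\<bar>"
    unfolding cov_Suc_frontier[OF assms(3-7)] by linarith
  also have "\<dots> = (1-b)*(1-2*a) * \<bar>cov s x (p y)\<bar> + b*(1-2*a) * \<bar>cov s (p x) (p y)\<bar>"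
    using a b by (simp add: abs_mult)
  also have "\<dots> \<le> (1-b)*(1-2*a) * A + b*(1-2*a) * (A*q)"
    using assms(8,9) a b by (intro add_mono mult_left_mono) auto
  also have "\<dots> = A * ((1-2*a) * ((1-b) + b*q))"
    by (simp add: algebra_simps)
  also have "\<dots> \<le> A * (\<rho> * q)"
    using assms(1,2) unfolding decay_rates_def by (intro mult_left_mono) auto
  finally show ?thesis .
qed

lemma abs_cov_le_decay:
  assumes rates: "decay_rates q \<rho>"
  shows "\<bar>cov s x y\<bar> \<le> 4 * q^(level y - level x) * \<rho>^s"
proof (induction s arbitrary: x y)
  case 0
  show ?case using rates by (simp add: decay_rates_def)
next
  case (Suc s)
  have q: "0 < q" "q \<le> 1" and \<rho>: "1 \<le> \<rho>" using rates by (auto simp: decay_rates_def)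
  consider "level y \<le> level x" | "x = r" | "Suc s < level y"
    | "x \<noteq> r" "level x < level y" "level y \<le> Suc s" by fastforce
  then show ?case
  proof cases
    case 1
    then show ?thesis
      using abs_cov_le[of "Suc s" x y] one_le_power[OF \<rho>, of "Suc s"] by simp
  next
    case 2
    then show ?thesis using q \<rho> by simp
  next
    case 3
    then show ?thesis using q \<rho> by (simp add: cov_unreached)
  next
    case 4
    have y: "y \<noteq> r" "x \<noteq> y" using 4 by auto
    obtain k where k: "level y - level x = Suc k" using 4 by (metis Suc_diff_Suc)
    have levels: "level (p y) - level x = k" "level y - level (p x) = Suc (Suc k)"
      "level (p y) - level (p x) = Suc k"
      using level_parent[OF \<open>x \<noteq> r\<close>] level_parent[OF \<open>y \<noteq> r\<close>] k 4 by auto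
    define A where "A = 4 * \<rho>^s * q^k"
    have A: "0 \<le> A" using q \<rho> by (simp add: A_def)
    have IH: "\<bar>cov s x y\<bar> \<le> A * q" "\<bar>cov s x (p y)\<bar> \<le> A"
      "\<bar>cov s (p x) y\<bar> \<le> A * q * q" "\<bar>cov s (p x) (p y)\<bar> \<le> A * q"
      using Suc.IH[of x y] Suc.IH[of x "p y"] Suc.IH[of "p x" y] Suc.IH[of "p x" "p y"] k levels
      by (simp_all add: A_def algebra_simps)
    have "\<bar>cov (Suc s) x y\<bar> \<le> A * (\<rho> * q)"
    proof (cases "level y \<le> s")
      case True
      then show ?thesis
        using abs_cov_Suc_le_settled[OF rates A y(2) \<open>x \<noteq> r\<close> y(1)] 4 IH by simp
    next
      case False
      then show ?thesis
        using abs_cov_Suc_le_frontier[OF rates A y(2) \<open>x \<noteq> r\<close> y(1)] 4 IH by simp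
    qed
    then show ?thesis unfolding k A_def by (simp add: algebra_simps)
  qed
qed

definition level_gap :: "'v \<Rightarrow> 'v \<Rightarrow> nat" where
  "level_gap u v = (if level u \<le> level v then level v - level u else level u - level v)"

lemma abs_cov_le_near_far:
  assumes rates: "decay_rates q \<rho>"
  shows "\<bar>cov s u v\<bar> \<le> 4 * (q^W * \<rho>^s) + 4 * of_bool (u \<noteq> r \<and> v \<noteq> r \<and> level_gap u v < W)"
proof -
  have q: "0 < q" "q \<le> 1" and \<rho>: "1 \<le> \<rho>" using rates by (auto simp: decay_rates_def)
  then have K: "0 \<le> q^W * \<rho>^s" by simp
  consider "u \<noteq> r \<and> v \<noteq> r \<and> level_gap u v < W" | "u = r \<or> v = r" | "W \<le> level_gap u v" by linarith
  then show ?thesis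
  proof cases
    case 1
    then show ?thesis using abs_cov_le[of s u v] K by simp
  next
    case 2
    then show ?thesis using K cov_commute[of s u v] by auto
  next
    case 3
    have "\<bar>cov s u v\<bar> \<le> 4 * q^(level_gap u v) * \<rho>^s"
      using abs_cov_le_decay[OF rates, of s u v] abs_cov_le_decay[OF rates, of s v u]
      by (auto simp: level_gap_def cov_commute)
    also have "\<dots> \<le> 4 * (q^W * \<rho>^s)"
      using 3 q \<rho> by (simp add: power_decreasing)
    finally show ?thesis using 3 by simp
  qed
qed

lemma opinion_bias_spread:
  assumes f: "f \<in> set_pmf (spread t)"
  shows "opinion_bias f = (\<Sum>v\<in>tree_ball t. opinion_val (f v)) / real (card (tree_ball t))"
proof -
  have reached: "{v. f v \<noteq> Bot} = tree_ball t"
    using spread_Bot_iff[OF f] by (simp add: not_less)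
  have "level v \<le> t" if "f v \<noteq> Bot" for v
    using that spread_Bot_iff[OF f, of v] by simp
  then have Pos: "{v. f v = Pos} = tree_ball t \<inter> {v. f v = Pos}"
    and Neg: "{v. f v = Neg} = tree_ball t \<inter> {v. f v = Neg}"
    by fastforce+
  have "(\<Sum>v\<in>tree_ball t. opinion_val (f v)) =
      (\<Sum>v\<in>tree_ball t. of_bool (f v = Pos)) - (\<Sum>v\<in>tree_ball t. of_bool (f v = Neg))"
    by (simp only: opinion_val_eq_of_bool sum_subtractf)
  also have "\<dots> = real (card {v. f v = Pos}) - real (card {v. f v = Neg})"
    using finite_tree_ball[of t] by (simp flip: Pos Neg)
  finally show ?thesis unfolding opinion_bias_def reached by simp
qed

lemma expectation_opinion_bias:
  "measure_pmf.expectation (spread t) opinion_bias = (\<Sum>v\<in>tree_ball t. mean t v) / real (card (tree_ball t))"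
proof -
  have "measure_pmf.expectation (spread t) opinion_bias =
        measure_pmf.expectation (spread t) (\<lambda>f. (\<Sum>v\<in>tree_ball t. opinion_val (f v)) / real (card (tree_ball t)))"
    by (rule expectation_cong_finite_pmf[OF finite_set_spread]) (rule opinion_bias_spread)
  also have "\<dots> = (\<Sum>v\<in>tree_ball t. mean t v) / real (card (tree_ball t))"
    unfolding mean_def
    by (simp only: integral_divide_zero
        Bochner_Integration.integral_sum[OF integrable_measure_pmf_finite[OF finite_set_spread]])
  finally show ?thesis .
qed

lemma variance_opinion_bias:
  "measure_pmf.variance (spread t) opinion_bias =
   (\<Sum>u\<in>tree_ball t. \<Sum>v\<in>tree_ball t. cov t u v) / (real (card (tree_ball t)))\<^sup>2"
proof -
  let ?V = "real (card (tree_ball t))"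
  let ?Z = "\<lambda>f v. opinion_val (f v) - mean t v"
  have "measure_pmf.variance (spread t) opinion_bias =
    measure_pmf.expectation (spread t) (\<lambda>f. (\<Sum>u\<in>tree_ball t. \<Sum>v\<in>tree_ball t. ?Z f u * ?Z f v) / ?V\<^sup>2)"
  proof (rule expectation_cong_finite_pmf[OF finite_set_spread])
    fix f assume f: "f \<in> set_pmf (spread t)"
    have "opinion_bias f - measure_pmf.expectation (spread t) opinion_bias = (\<Sum>u\<in>tree_ball t. ?Z f u) / ?V"
      unfolding opinion_bias_spread[OF f] expectation_opinion_bias by (simp add: sum_subtractf diff_divide_distrib)
    then show "(opinion_bias f - measure_pmf.expectation (spread t) opinion_bias)\<^sup>2 =
      (\<Sum>u\<in>tree_ball t. \<Sum>v\<in>tree_ball t. ?Z f u * ?Z f v) / ?V\<^sup>2"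
      by (simp only: power2_eq_square sum_product times_divide_times_eq)
  qed
  also have "\<dots> = (\<Sum>u\<in>tree_ball t. \<Sum>v\<in>tree_ball t. cov t u v) / ?V\<^sup>2"
    unfolding cov_def
    by (simp only: integral_divide_zero
        Bochner_Integration.integral_sum[OF integrable_measure_pmf_finite[OF finite_set_spread]])
  finally show ?thesis .
qed

lemma card_near_le:
  assumes u: "level u \<le> t" and W: "1 \<le> W"
    and window: "\<And>s s'. s \<le> s' \<Longrightarrow> s' \<le> t \<Longrightarrow> s' - s \<le> W \<Longrightarrow>
                 real (card {v. s < level v \<and> level v \<le> s'}) \<le> M * real (card (tree_ball t))"
  shows "real (card (tree_ball t \<inter> {v. u \<noteq> r \<and> v \<noteq> r \<and> level_gap u v < W}))
           \<le> 2 * M * real (card (tree_ball t))"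
proof -
  define below where "below = {v. level u - W < level v \<and> level v \<le> level u}"
  define above where "above = {v. level u < level v \<and> level v \<le> min t (level u + W - 1)}"
  have "tree_ball t \<inter> {v. u \<noteq> r \<and> v \<noteq> r \<and> level_gap u v < W} \<subseteq> below \<union> above"
  proof
    fix v assume v: "v \<in> tree_ball t \<inter> {v. u \<noteq> r \<and> v \<noteq> r \<and> level_gap u v < W}"
    then have "0 < level v" using level_eq_0_iff by auto
    with v show "v \<in> below \<union> above"
      unfolding below_def above_def level_gap_def by (simp split: if_splits; arith)
  qed
  moreover have "finite below" "finite above" unfolding below_def above_def
    by (auto intro: finite_subset[OF _ finite_tree_ball])
  ultimately have "card (tree_ball t \<inter> {v. u \<noteq> r \<and> v \<noteq> r \<and> level_gap u v < W})
      \<le> card below + card above"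
    by (meson card_Un_le card_mono finite_UnI le_trans)
  also have "real (card below + card above) \<le> M * real (card (tree_ball t)) + M * real (card (tree_ball t))"
    unfolding below_def above_def using u W by (simp only: of_nat_add) (intro add_mono window; simp)
  finally show ?thesis by simp
qed

lemma variance_opinion_bias_le:
  assumes rates: "decay_rates q \<rho>" and W: "1 \<le> W"
    and window: "\<And>s s'. s \<le> s' \<Longrightarrow> s' \<le> t \<Longrightarrow> s' - s \<le> W \<Longrightarrow>
                 real (card {v. s < level v \<and> level v \<le> s'}) \<le> M * real (card (tree_ball t))"
  shows "measure_pmf.variance (spread t) opinion_bias \<le> 4 * (q^W * \<rho>^t) + 8 * M"
proof -
  let ?V = "real (card (tree_ball t))"
  let ?K = "q^W * \<rho>^t"
  have row: "(\<Sum>v\<in>tree_ball t. cov t u v) \<le> (4 * ?K + 8 * M) * ?V" if u: "u \<in> tree_ball t" for u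
  proof -
    have "(\<Sum>v\<in>tree_ball t. cov t u v) \<le>
        (\<Sum>v\<in>tree_ball t. 4 * ?K + 4 * of_bool (u \<noteq> r \<and> v \<noteq> r \<and> level_gap u v < W))"
      by (intro sum_mono order_trans[OF abs_ge_self abs_cov_le_near_far[OF rates]])
    also have "\<dots> = 4 * ?K * ?V +
        4 * real (card (tree_ball t \<inter> {v. u \<noteq> r \<and> v \<noteq> r \<and> level_gap u v < W}))"
      using finite_tree_ball[of t] by (simp add: sum.distrib sum_distrib_left[symmetric])
    also have "\<dots> \<le> (4 * ?K + 8 * M) * ?V"
      using card_near_le[of u t W M] u W window by (simp add: algebra_simps)
    finally show ?thesis .
  qed
  have "(\<Sum>u\<in>tree_ball t. \<Sum>v\<in>tree_ball t. cov t u v) \<le> (\<Sum>u\<in>tree_ball t. (4 * ?K + 8 * M) * ?V)"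
    by (intro sum_mono row)
  also have "\<dots> = (4 * ?K + 8 * M) * ?V\<^sup>2"
    by (simp add: power2_eq_square)
  finally show ?thesis
    unfolding variance_opinion_bias using card_tree_ball_pos[of t] by (simp add: divide_le_eq)
qed

lemma decay_rates_perturbation:
  assumes "0 < a" "0 \<le> \<delta>" "\<delta> \<le> 1/2" "(1-2*a)*(1-b) / (1-(1-2*a)*b) \<le> 1 - \<delta>"
  shows "decay_rates (1 - \<delta>) (1 + \<delta>\<^sup>2/2)"
proof -
  define q where "q = 1 - \<delta>"
  define \<theta> where "\<theta> = 1 - 2*a"
  have q: "0 < q" "q \<le> 1" "1/2 \<le> q" using assms(2,3) by (auto simp: q_def)
  have \<theta>: "0 \<le> \<theta>" "\<theta> < 1" using assms(1) a_le_half by (auto simp: \<theta>_def)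
  have "0 \<le> (b - 1/2)\<^sup>2" by simp
  then have "b*(1-b) \<le> 1/4" by (simp add: power2_eq_square algebra_simps)
  then have "b*(1-b)*\<delta>\<^sup>2 \<le> 1/4 * \<delta>\<^sup>2" by (intro mult_right_mono) auto
  also have "\<dots> \<le> \<delta>\<^sup>2/2 * q"
    using mult_left_mono[OF q(3), of "\<delta>\<^sup>2/2"] by simp
  moreover have "((1-b)*(1-b) + b*b) * q + b*(1-b)*(q*q + 1) = q + b*(1-b)*\<delta>\<^sup>2"
    by (simp add: q_def algebra_simps power2_eq_square)
  ultimately have settled: "((1-b)*(1-b) + b*b) * q + b*(1-b)*(q*q + 1) \<le> (1 + \<delta>\<^sup>2/2) * q"
    by (simp add: algebra_simps)
  have "0 < 1 - \<theta>*b"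
    using mult_left_le[OF b_le_1 \<theta>(1)] \<theta>(2) by linarith
  then have "\<theta>*(1-b) \<le> q * (1 - \<theta>*b)"
    using assms(4) by (simp add: q_def \<theta>_def divide_le_eq)
  then have "\<theta>*((1-b) + b*q) \<le> q" by (simp add: algebra_simps)
  also have "\<dots> \<le> (1 + \<delta>\<^sup>2/2) * q" using q by simp
  finally show ?thesis
    using settled q unfolding decay_rates_def q_def \<theta>_def by simp
qed

lemma variance_opinion_bias_le_exp:
  assumes "0 < a" "0 < c" "1 \<le> t" and \<delta>_le: "real t powr (c - 1/2) \<le> 1/2"
    and \<delta>_le': "(1-2*a)*(1-b) / (1-(1-2*a)*b) \<le> 1 - real t powr (c - 1/2)"
    and window: "\<And>s s'. s \<le> s' \<Longrightarrow> s' \<le> t \<Longrightarrow> real (s' - s) \<le> real t powr (1/2 + c) \<Longrightarrow>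
                 real (card {v. s < level v \<and> level v \<le> s'}) \<le> M * real (card (tree_ball t))"
  shows "measure_pmf.variance (spread t) opinion_bias \<le> 4 * exp (1 - real t powr (2*c) / 2) + 8 * M"
proof -
  define \<delta> where "\<delta> = real t powr (c - 1/2)"
  define W where "W = nat \<lfloor>real t powr (1/2 + c)\<rfloor>"
  have W: "1 \<le> W"
    using assms(2,3) ge_one_powr_ge_zero[of "real t" "1/2 + c"] by (simp add: W_def le_nat_iff)
  have "measure_pmf.variance (spread t) opinion_bias \<le> 4 * ((1 - \<delta>)^W * (1 + \<delta>\<^sup>2/2)^t) + 8 * M"
  proof (rule variance_opinion_bias_le[OF decay_rates_perturbation W])
    fix s s' assume "s \<le> s'" "s' \<le> t" "s' - s \<le> W"
    moreover have "real W \<le> real t powr (1/2 + c)" by (simp add: W_def)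
    ultimately show "real (card {v. s < level v \<and> level v \<le> s'}) \<le> M * real (card (tree_ball t))"
      by (intro window) auto
  qed (use assms in \<open>auto simp: \<delta>_def\<close>)
  also have "(1 - \<delta>)^W * (1 + \<delta>\<^sup>2/2)^t \<le> exp (1 - real t powr (2*c) / 2)"
    unfolding \<delta>_def W_def by (rule contraction_growth_le_exp[OF assms(3) \<delta>_le])
  finally show ?thesis by simp
qed

lemma variance_opinion_bias_tendsto_0:
  assumes "0 < a" "0 < c" "window_growth c \<longlonglongrightarrow> 0"
  shows "(\<lambda>t. measure_pmf.variance (spread t) opinion_bias) \<longlonglongrightarrow> 0"
proof -
  define c' where "c' = min c (1/4)"
  have c': "0 < c'" "c' \<le> c" "c' < 1/2" using assms(2) by (auto simp: c'_def)
  define \<theta> where "\<theta> = 1 - 2*a"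
  have "\<theta>*(1-b) / (1 - \<theta>*b) < 1"
  proof -
    have \<theta>: "0 \<le> \<theta>" "\<theta> < 1" using assms(1) a_le_half by (auto simp: \<theta>_def)
    then have "0 < 1 - \<theta>*b" using mult_left_le[OF b_le_1 \<theta>(1)] by linarith
    moreover have "\<theta>*(1-b) < 1 - \<theta>*b" using \<theta> by (simp add: algebra_simps)
    ultimately show ?thesis by simp
  qed
  moreover have "(\<lambda>t::nat. real t powr (c' - 1/2)) \<longlonglongrightarrow> 0"
    using c' by real_asymp
  ultimately have small: "\<forall>\<^sub>F t in sequentially.
      real t powr (c' - 1/2) < min (1/2) (1 - \<theta>*(1-b) / (1 - \<theta>*b))"
    by (intro order_tendstoD(2)) auto
  have bound: "\<forall>\<^sub>F t in sequentially. measure_pmf.variance (spread t) opinion_bias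
          \<le> 4 * exp (1 - real t powr (2*c') / 2) + 8 * window_growth c t"
    using small eventually_ge_at_top[of 1]
  proof eventually_elim
    case (elim t)
    show ?case
    proof (rule variance_opinion_bias_le_exp[OF assms(1) c'(1) elim(2)])
      fix s s' assume "s \<le> s'" "s' \<le> t" "real (s' - s) \<le> real t powr (1/2 + c')"
      moreover have "real t powr (1/2 + c') \<le> real t powr (0.5 + c)"
        using elim(2) c' by (intro powr_mono) auto
      ultimately show "real (card {v. s < level v \<and> level v \<le> s'})
          \<le> window_growth c t * real (card (tree_ball t))"
        by (intro card_levels_between_le_window_growth[OF assms(2) elim(2)]) auto
    qed (use elim(1) in \<open>auto simp: \<theta>_def\<close>)
  qed
  have exp_lim: "(\<lambda>t::nat. exp (1 - real t powr (2*c') / 2)) \<longlonglongrightarrow> 0"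
    using c' by real_asymp
  have lim: "(\<lambda>t. 4 * exp (1 - real t powr (2*c') / 2) + 8 * window_growth c t) \<longlonglongrightarrow> 0"
    by (rule tendsto_add_zero[OF tendsto_mult_right_zero[OF exp_lim] tendsto_mult_right_zero[OF assms(3)]])
  have nonneg: "\<forall>\<^sub>F t in sequentially. 0 \<le> measure_pmf.variance (spread t) opinion_bias"
    by (intro always_eventually allI integral_nonneg_AE AE_pmfI) simp
  show ?thesis
    by (rule tendsto_sandwich[OF nonneg bound tendsto_const lim])
qed

end

theorem mainTheorem16:
  fixes E :: "'v \<Rightarrow> 'v \<Rightarrow> bool" and r :: 'v and p :: "'v \<Rightarrow> 'v"
    and a b c :: real
  assumes "undirected E" and "connected_graph E" and "locally_finite E"
    and "bfs_parent E r p"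
    and "0 < a" and "a < 1/2" and "0 < b" and "b < 1" and "0 < c"
    and "(\<lambda>t::nat. Max {(real (volume E r s') - real (volume E r s)) / real (volume E r t) | s s'.
             s < s' \<and> s' \<le> t \<and> real (s' - s) \<le> real t powr (0.5 + c)}) \<longlonglongrightarrow> 0"
  shows "\<forall>\<eta>>0. \<exists>t0. \<forall>t\<ge>t0.
           measure_pmf.prob (spread_dist a b r p t)
             {f. \<bar>opinion_bias f - measure_pmf.expectation (spread_dist a b r p t) opinion_bias\<bar> > \<eta>}
           < \<eta>"
proof (intro allI impI)
  interpret spread_process E r p a b
    using assms(3-8) by unfold_locales auto
  have "window_growth c \<longlonglongrightarrow> 0"
    using assms(10) by (simp add: window_growth_def)
  then have variance: "(\<lambda>t. measure_pmf.variance (spread t) opinion_bias) \<longlonglongrightarrow> 0"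
    using assms(5,9) by (intro variance_opinion_bias_tendsto_0)
  fix \<eta> :: real assume \<eta>: "0 < \<eta>"
  obtain t0 where "\<And>t. t0 \<le> t \<Longrightarrow> measure_pmf.variance (spread t) opinion_bias < \<eta>^3"
    using order_tendstoD(2)[OF variance, of "\<eta>^3"] \<eta> by (auto simp: eventually_sequentially)
  then show "\<exists>t0. \<forall>t\<ge>t0. measure_pmf.prob (spread t)
      {f. \<bar>opinion_bias f - measure_pmf.expectation (spread t) opinion_bias\<bar> > \<eta>} < \<eta>"
    using prob_abs_deviation_gt_lt[OF finite_set_spread \<eta>] by blast
qed

end
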